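(* Let $N$ be a unitarily invariant norm on $M_n$ normalized so that $N(E_{11})=1$, and let $D$ be a positive definite diagonal matrix. Then $$I(N,D)=N'(D^{-1})^{-1},$$ where $N'$ is the dual norm of $N$.
   Context: $M_n$ is the set of complex $n\times n$ matrices, $P(n)$ the positive semidefinite ones, $\circ$ the Hadamard product, $E_{11}$ the matrix unit with a $1$ in position $(1,1)$ and zeros elsewhere. $I(N,A)=\min\{N(A\circ B): B\in P(n),\ N(B)=1\}$. The dual norm is $N'(X)=\max\{|\operatorname{tr}(X Y^* )|: N(Y)\le1\}$; equivalently, if $\Phi$ is the symmetric gauge function with $N(X)=\Phi(s_1(X),\dots,s_n(X))$ (singular values), $N'$ corresponds to the dual gauge function $\Phi'$. *)

theory Defs
  imports "HOL-Analysis.Analysis"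
begin

definition adjoint :: "complex^'n^'m \<Rightarrow> complex^'m^'n" where
  "adjoint A = (\<chi> i j. cnj (A $ j $ i))"

definition unitary :: "complex^'n^'n \<Rightarrow> bool" where
  "unitary U \<longleftrightarrow> U ** adjoint U = mat 1 \<and> adjoint U ** U = mat 1"

definition psd :: "complex^'n^'n \<Rightarrow> bool" where
  "psd A \<longleftrightarrow> adjoint A = A \<and>
     (\<forall>x :: complex^'n. 0 \<le> Re (\<Sum>i\<in>UNIV. \<Sum>j\<in>UNIV. cnj (x $ i) * A $ i $ j * x $ j))"

definition hadamard :: "complex^'n^'m \<Rightarrow> complex^'n^'m \<Rightarrow> complex^'n^'m" (infixl "\<circ>\<^sub>H" 70) where
  "A \<circ>\<^sub>H B = (\<chi> i j. A $ i $ j * B $ i $ j)"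

definition matrix_unit :: "'n \<Rightarrow> 'n \<Rightarrow> complex^'n^'n" where
  "matrix_unit k l = (\<chi> i j. if i = k \<and> j = l then 1 else 0)"

definition is_matrix_norm :: "(complex^'n^'n \<Rightarrow> real) \<Rightarrow> bool" where
  "is_matrix_norm N \<longleftrightarrow>
     (\<forall>X. 0 \<le> N X) \<and> (\<forall>X. N X = 0 \<longleftrightarrow> X = 0) \<and>
     (\<forall>(c::complex) X. N (\<chi> i j. c * X $ i $ j) = cmod c * N X) \<and> (\<forall>X Y. N (X + Y) \<le> N X + N Y)"

definition unitarily_invariant_norm :: "(complex^'n^'n \<Rightarrow> real) \<Rightarrow> bool" where
  "unitarily_invariant_norm N \<longleftrightarrow> is_matrix_norm N \<and>
     (\<forall>U V X. unitary U \<longrightarrow> unitary V \<longrightarrow> N (U ** X ** V) = N X)"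

text \<open>I(N,A) = min { N(A \<circ> B) : B psd, N(B) = 1 } (the minimum is attained; we use Inf).\<close>
definition I_index :: "(complex^'n^'n \<Rightarrow> real) \<Rightarrow> complex^'n^'n \<Rightarrow> real" where
  "I_index N A = Inf {N (A \<circ>\<^sub>H B) | B. psd B \<and> N B = 1}"

text \<open>Dual norm N'(X) = max { |tr(X Y^*)| : N(Y) \<le> 1 } (attained; we use Sup).\<close>
definition dual_norm :: "(complex^'n^'n \<Rightarrow> real) \<Rightarrow> complex^'n^'n \<Rightarrow> real" where
  "dual_norm N X = Sup {cmod (trace (X ** adjoint Y)) | Y. N Y \<le> 1}"

definition pos_def_diagonal :: "complex^'n^'n \<Rightarrow> bool" where
  "pos_def_diagonal D \<longleftrightarrow> (\<forall>i j. i \<noteq> j \<longrightarrow> D $ i $ j = 0) \<and>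
     (\<forall>i. D $ i $ i \<in> \<real> \<and> 0 < Re (D $ i $ i))"

end

theory Submission
  imports Defs
begin

text \<open>
  Write \<open>D = diag d\<close>. Pinching (averaging
  with conjugates by diagonal sign matrices) does not increase \<open>N\<close>, so \<open>N (diag |Y\<^sub>i\<^sub>i|) \<le> N Y\<close>
  and \<open>|Y\<^sub>i\<^sub>j| \<le> N Y\<close>. Householder reflections make every rank-one projection unitarily
  equivalent to \<open>E\<^sub>k\<^sub>k\<close>, so \<open>N (v v\<^sup>*) = |v|\<^sup>2\<close>. Splitting off rank-one terms by Schur
  complements then gives \<open>N B \<le> tr B\<close> for positive semidefinite \<open>B\<close>.

  Since \<open>D \<circ> B = diag (d\<^sub>i B\<^sub>i\<^sub>i)\<close>, both sides only see diagonals. A positive semidefinite \<open>B\<close>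
  with \<open>N B = 1\<close> yields the test matrix \<open>(D \<circ> B) / N (D \<circ> B)\<close> for the dual norm, whence
  \<open>1 \<le> N'(D\<^sup>-\<^sup>1) N (D \<circ> B)\<close>. Conversely, \<open>Y\<close> with \<open>N Y \<le> 1\<close> yields the rank-one
  \<open>B = v v\<^sup>* / |v|\<^sup>2\<close> with \<open>v\<^sub>i = sqrt (|Y\<^sub>i\<^sub>i| / d\<^sub>i)\<close>, for which
  \<open>N (D \<circ> B) \<le> 1 / |v|\<^sup>2\<close> while \<open>|tr (D\<^sup>-\<^sup>1 Y\<^sup>*)| \<le> |v|\<^sup>2\<close>.
\<close>

section \<open>Diagonal, rank-one and unitary matrices\<close>

definition mat_scale :: "complex \<Rightarrow> complex^'n^'m \<Rightarrow> complex^'n^'m" where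
  "mat_scale c X = (\<chi> i j. c * X $ i $ j)"

definition diag_mat :: "('n \<Rightarrow> complex) \<Rightarrow> complex^'n^'n" where
  "diag_mat f = (\<chi> i j. if i = j then f i else 0)"

definition outer :: "complex^'n \<Rightarrow> complex^'n^'n" where
  "outer v = (\<chi> i j. v $ i * cnj (v $ j))"

lemma mat_scale_nth [simp]: "mat_scale c X $ i $ j = c * X $ i $ j"
  by (simp add: mat_scale_def)

lemma mat_scale_1 [simp]: "mat_scale 1 X = X"
  by (simp add: vec_eq_iff)

lemma outer_nth [simp]: "outer v $ i $ j = v $ i * cnj (v $ j)"
  by (simp add: outer_def)

lemma adjoint_nth [simp]: "adjoint A $ i $ j = cnj (A $ j $ i)"
  by (simp add: adjoint_def)

lemma diag_mat_nth [simp]: "diag_mat f $ i $ j = (if i = j then f i else 0)"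
  by (simp add: diag_mat_def)

lemma adjoint_adjoint [simp]: "adjoint (adjoint A) = A"
  by (simp add: vec_eq_iff)

lemma diag_mat_mult_nth [simp]: "(diag_mat f ** X) $ i $ j = f i * X $ i $ j"
  by (simp add: diag_mat_def matrix_matrix_mult_def if_distrib[where f="\<lambda>x. x * _"] cong: if_cong)

lemma mult_diag_mat_nth [simp]: "(X ** diag_mat f) $ i $ j = X $ i $ j * f j"
  by (simp add: diag_mat_def matrix_matrix_mult_def if_distrib[where f="\<lambda>x. _ * x"] cong: if_cong)

lemma diag_mat_mult_diag_mat: "diag_mat f ** diag_mat g = diag_mat (\<lambda>i. f i * g i)"
  by (simp add: vec_eq_iff)

lemma adjoint_diag_mat: "adjoint (diag_mat f) = diag_mat (\<lambda>i. cnj (f i))"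
  by (simp add: vec_eq_iff)

lemma mat_1_eq_diag_mat: "mat 1 = diag_mat (\<lambda>_. 1)"
  by (simp add: vec_eq_iff mat_def)

lemma adjoint_mult: "adjoint (A ** B) = adjoint B ** adjoint A"
  by (simp add: vec_eq_iff matrix_matrix_mult_def mult.commute)

lemma unitary_mult: "unitary U \<Longrightarrow> unitary V \<Longrightarrow> unitary (U ** V)"
  unfolding unitary_def adjoint_mult
  by (metis matrix_mul_assoc matrix_mul_rid)

lemma unitary_diag_mat:
  assumes "\<And>i. cmod (f i) = 1"
  shows "unitary (diag_mat f)"
proof -
  have "f i * cnj (f i) = 1" for i
    using assms[of i] by (simp flip: complex_norm_square)
  then show ?thesis
    by (simp add: unitary_def adjoint_diag_mat diag_mat_mult_diag_mat mat_1_eq_diag_mat mult.commute)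
qed

lemma unitary_mat_1: "unitary (mat 1)"
  by (simp add: mat_1_eq_diag_mat unitary_diag_mat)

lemma matrix_inv_diag_mat:
  assumes "\<And>i. f i * g i = 1"
  shows "matrix_inv (diag_mat f) = diag_mat g"
proof -
  have fg: "diag_mat f ** diag_mat g = mat 1" and gf: "diag_mat g ** diag_mat f = mat 1"
    using assms by (simp_all add: diag_mat_mult_diag_mat mat_1_eq_diag_mat mult.commute)
  define M where "M = matrix_inv (diag_mat f)"
  have "diag_mat f ** M = mat 1 \<and> M ** diag_mat f = mat 1"
    unfolding M_def matrix_inv_def by (rule someI[of _ "diag_mat g"]) (simp add: fg gf)
  then have "M = M ** (diag_mat f ** diag_mat g)" and "M ** diag_mat f = mat 1"
    by (simp_all add: fg)
  then show ?thesis
    by (simp add: M_def matrix_mul_assoc)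
qed

lemma pos_def_diagonalE:
  assumes "pos_def_diagonal D"
  obtains d where "\<And>i. 0 < d i" and "D = diag_mat (\<lambda>i. complex_of_real (d i))"
    and "matrix_inv D = diag_mat (\<lambda>i. complex_of_real (1 / d i))"
proof -
  define d where "d i = Re (D $ i $ i)" for i
  have d: "0 < d i" for i
    using assms by (simp add: pos_def_diagonal_def d_def)
  have D: "D = diag_mat (\<lambda>i. complex_of_real (d i))"
    using assms by (auto simp add: pos_def_diagonal_def d_def vec_eq_iff complex_is_Real_iff)
  have "d i \<noteq> 0" for i
    using d[of i] by simp
  then have "matrix_inv D = diag_mat (\<lambda>i. complex_of_real (1 / d i))"
    unfolding D by (intro matrix_inv_diag_mat) (simp flip: of_real_mult)
  with d D show ?thesis
    by (rule that)
qed

lemma hadamard_diag_mat: "diag_mat g \<circ>\<^sub>H B = diag_mat (\<lambda>i. g i * B $ i $ i)"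
  by (simp add: hadamard_def vec_eq_iff)

lemma trace_mult_adjoint: "trace (X ** adjoint Y) = (\<Sum>i\<in>UNIV. \<Sum>j\<in>UNIV. X $ i $ j * cnj (Y $ i $ j))"
  by (simp add: trace_def matrix_matrix_mult_def)

lemma trace_mat_scale: "trace (mat_scale c X) = c * trace X"
  by (simp add: trace_def sum_distrib_left)

lemma trace_diag_mat_mult: "trace (diag_mat f ** X) = (\<Sum>i\<in>UNIV. f i * X $ i $ i)"
  by (simp add: trace_def)

lemma norm_power2_vec: "(norm v)\<^sup>2 = (\<Sum>i\<in>UNIV. (cmod (v $ i))\<^sup>2)"
  by (simp add: norm_vec_def L2_set_def sum_nonneg)

lemma sum_mult_cnj: "(\<Sum>i\<in>UNIV. v $ i * cnj (v $ i)) = complex_of_real ((norm v)\<^sup>2)"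
  by (simp add: norm_power2_vec complex_norm_square del: of_real_power)

lemma trace_outer: "trace (outer v) = complex_of_real ((norm v)\<^sup>2)"
  by (simp add: trace_def sum_mult_cnj)

lemma norm_axis_one: "norm (axis i (1::complex)) = 1"
  by (simp add: inner_axis' norm_eq_1)

lemma matrix_unit_nth [simp]: "matrix_unit a b $ i $ j = (if i = a \<and> j = b then 1 else 0)"
  by (simp add: matrix_unit_def)

lemma matrix_unit_eq_outer: "matrix_unit i i = outer (axis i 1)"
  by (simp add: vec_eq_iff matrix_unit_def axis_def)

lemma mult_matrix_unit_nth: "(X ** matrix_unit a b) $ i $ j = (if j = b then X $ i $ a else 0)"
  by (simp add: matrix_matrix_mult_def if_distrib[where f="\<lambda>x. _ * x"] cong: if_cong)

lemma unitary_conj_matrix_unit: "U ** matrix_unit k k ** adjoint U = outer (column k U)"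
  by (simp add: vec_eq_iff matrix_matrix_mult_def[of "U ** matrix_unit k k"] mult_matrix_unit_nth
      column_def if_distrib[where f="\<lambda>x. x * _"] cong: if_cong)

section \<open>Householder reflections\<close>

definition householder :: "complex^'n \<Rightarrow> complex^'n^'n" where
  "householder w = mat 1 - mat_scale (2 / complex_of_real ((norm w)\<^sup>2)) (outer w)"

lemma adjoint_householder: "adjoint (householder w) = householder w"
  by (simp add: householder_def vec_eq_iff mat_def)

lemma householder_mult_self:
  assumes "w \<noteq> 0"
  shows "householder w ** householder w = mat 1"
proof -
  define c where "c = 2 / complex_of_real ((norm w)\<^sup>2)"
  have c: "c * (complex_of_real (norm w))\<^sup>2 = 2"
    using assms by (simp add: c_def)
  have "(\<Sum>l\<in>UNIV. (mat 1 $ i $ l - c * (w $ i * cnj (w $ l))) * (mat 1 $ l $ j - c * (w $ l * cnj (w $ j))))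
      = mat 1 $ i $ j - c * (w $ i * cnj (w $ j)) * (2 - c * (\<Sum>l\<in>UNIV. w $ l * cnj (w $ l)))" for i j
    by (simp add: mat_def algebra_simps sum_subtractf sum.distrib sum_distrib_left
        if_distrib[where f="\<lambda>x. x * _"] if_distrib[where f="\<lambda>x. _ * x"] cong: if_cong)
  moreover have "householder w = mat 1 - mat_scale c (outer w)"
    by (simp add: householder_def c_def)
  ultimately show ?thesis
    by (simp add: vec_eq_iff matrix_matrix_mult_def sum_mult_cnj c)
qed

lemma unitary_householder: "w \<noteq> 0 \<Longrightarrow> unitary (householder w)"
  by (simp add: unitary_def adjoint_householder householder_mult_self)

text \<open>
  The hypothesis on \<open>u $ k\<close> says that \<open>cnj \<alpha> * u $ k\<close> is real and non-positive; this gives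
  \<open>|u - \<alpha> e\<^sub>k|\<^sup>2 = 2 (1 + |u $ k|)\<close>, which is what makes the reflection send \<open>e\<^sub>k\<close> into the
  line through \<open>u\<close>.
\<close>

lemma householder_column:
  fixes u :: "complex^'n"
  assumes u: "norm u = 1" and \<alpha>_norm: "cmod \<alpha> = 1"
    and uk: "u $ k = - complex_of_real (cmod (u $ k)) * \<alpha>"
  shows "u - axis k \<alpha> \<noteq> 0" and "householder (u - axis k \<alpha>) $ i $ k = cnj \<alpha> * u $ i"
proof -
  have \<alpha>: "cnj \<alpha> * \<alpha> = 1"
    using \<alpha>_norm by (simp add: mult.commute flip: complex_norm_square)
  define r where "r = cmod (u $ k) + 1"
  have r: "0 < r"
    by (simp add: r_def add_nonneg_pos)
  define w where "w = u - axis k \<alpha>"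
  have wk: "w $ k = - complex_of_real r * \<alpha>"
    by (simp add: w_def r_def algebra_simps) (subst uk, simp add: algebra_simps)
  have "(cmod (w $ j))\<^sup>2 = (cmod (u $ j))\<^sup>2 + (if j = k then r\<^sup>2 - (cmod (u $ k))\<^sup>2 else 0)" for j
  proof -
    have "cmod (w $ k) = r"
      using r unfolding wk norm_mult norm_minus_cancel norm_of_real \<alpha>_norm by simp
    then show ?thesis
      by (simp add: w_def axis_def)
  qed
  then have "(norm w)\<^sup>2 = (norm u)\<^sup>2 + (r\<^sup>2 - (cmod (u $ k))\<^sup>2)"
    unfolding norm_power2_vec by (simp add: sum.distrib)
  then have w_norm: "(norm w)\<^sup>2 = 2 * r"
    by (simp add: u r_def algebra_simps power2_eq_square)
  then show "u - axis k \<alpha> \<noteq> 0"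
    using r by (auto simp flip: w_def)
  have scale_wk: "2 / complex_of_real ((norm w)\<^sup>2) * cnj (w $ k) = - cnj \<alpha>"
    using r unfolding w_norm wk by (simp add: field_simps)
  have "householder w $ i $ k = mat 1 $ i $ k - w $ i * (2 / complex_of_real ((norm w)\<^sup>2) * cnj (w $ k))"
    by (simp add: householder_def mult_ac)
  then have "householder w $ i $ k = mat 1 $ i $ k + w $ i * cnj \<alpha>"
    unfolding scale_wk by simp
  then show "householder (u - axis k \<alpha>) $ i $ k = cnj \<alpha> * u $ i"
    using \<alpha> by (cases "i = k") (simp_all add: w_def axis_def mat_def algebra_simps)
qed

lemma unitary_with_column:
  fixes u :: "complex^'n"
  assumes "norm u = 1"
  obtains U where "unitary U" and "column k U = u"
proof
  define \<alpha> where "\<alpha> = (if u $ k = 0 then 1 else - u $ k / complex_of_real (cmod (u $ k)))"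
  have \<alpha>_norm: "cmod \<alpha> = 1"
    by (simp add: \<alpha>_def norm_divide)
  have uk: "u $ k = - complex_of_real (cmod (u $ k)) * \<alpha>"
    by (simp add: \<alpha>_def)
  define U where "U = householder (u - axis k \<alpha>) ** diag_mat (\<lambda>i. if i = k then \<alpha> else 1)"
  show "unitary U"
    unfolding U_def using householder_column(1)[OF assms \<alpha>_norm uk] \<alpha>_norm
    by (simp add: unitary_mult unitary_householder unitary_diag_mat)
  have "cnj \<alpha> * \<alpha> = 1"
    using \<alpha>_norm by (simp add: mult.commute flip: complex_norm_square)
  then show "column k U = u"
    unfolding U_def using householder_column(2)[OF assms \<alpha>_norm uk]
    by (simp add: column_def vec_eq_iff)
qed

section \<open>Positive semidefinite matrices\<close>

definition qform :: "complex^'n^'n \<Rightarrow> complex^'n \<Rightarrow> complex" where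
  "qform B x = (\<Sum>i\<in>UNIV. \<Sum>j\<in>UNIV. cnj (x $ i) * B $ i $ j * x $ j)"

lemma psd_iff_qform: "psd B \<longleftrightarrow> adjoint B = B \<and> (\<forall>x. 0 \<le> Re (qform B x))"
  by (simp add: psd_def qform_def)

lemma psd_hermitian: "psd B \<Longrightarrow> B $ j $ i = cnj (B $ i $ j)"
  unfolding psd_def by (metis adjoint_nth complex_cnj_cnj)

lemma psd_qform_nonneg: "psd B \<Longrightarrow> 0 \<le> Re (qform B x)"
  by (simp add: psd_iff_qform)

lemma qform_axis: "qform B (axis a c) = cnj c * B $ a $ a * c"
  by (simp add: qform_def axis_def if_distrib[where f=cnj] if_distrib[where f="\<lambda>x. x * _"]
      if_distrib[where f="\<lambda>x. _ * x"] cong: if_cong)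

lemma qform_add_axis:
  "qform B (x + axis a t) = qform B x + cnj t * (\<Sum>j\<in>UNIV. B $ a $ j * x $ j)
     + (\<Sum>i\<in>UNIV. cnj (x $ i) * B $ i $ a) * t + cnj t * B $ a $ a * t"
proof -
  have row: "(\<Sum>j\<in>UNIV. B $ i $ j * (x + axis a t) $ j) = (\<Sum>j\<in>UNIV. B $ i $ j * x $ j) + B $ i $ a * t" for i
    by (simp add: axis_def distrib_left sum.distrib if_distrib[where f="\<lambda>y. _ * y"] cong: if_cong)
  have "qform B (x + axis a t) = (\<Sum>i\<in>UNIV. cnj ((x + axis a t) $ i) * (\<Sum>j\<in>UNIV. B $ i $ j * (x + axis a t) $ j))"
    by (simp add: qform_def sum_distrib_left mult.assoc)
  also have "\<dots> = (\<Sum>i\<in>UNIV. cnj (x $ i) * ((\<Sum>j\<in>UNIV. B $ i $ j * x $ j) + B $ i $ a * t))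
      + cnj t * ((\<Sum>j\<in>UNIV. B $ a $ j * x $ j) + B $ a $ a * t)"
    unfolding row by (simp add: axis_def distrib_right sum.distrib if_distrib[where f=cnj]
        if_distrib[where f="\<lambda>y. y * _"] cong: if_cong)
  also have "\<dots> = qform B x + cnj t * (\<Sum>j\<in>UNIV. B $ a $ j * x $ j)
     + (\<Sum>i\<in>UNIV. cnj (x $ i) * B $ i $ a) * t + cnj t * B $ a $ a * t"
    by (simp add: qform_def distrib_left sum.distrib sum_distrib_left sum_distrib_right mult.assoc algebra_simps)
  finally show ?thesis .
qed

lemma psd_diag_real: "psd B \<Longrightarrow> B $ a $ a = complex_of_real (Re (B $ a $ a))"
  using psd_hermitian[of B a a] by (simp add: complex_eq_iff)

lemma psd_diag_nonneg: "psd B \<Longrightarrow> 0 \<le> Re (B $ a $ a)"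
  using psd_qform_nonneg[of B "axis a 1"] by (simp add: qform_axis)

lemma psd_zero_diag_row:
  assumes B: "psd B" and zero: "B $ a $ a = 0"
  shows "B $ a $ j = 0"
proof (rule ccontr)
  \<comment> \<open>\<open>qform B (e\<^sub>j + t e\<^sub>a)\<close> is affine in \<open>t\<close>, so it takes negative values unless \<open>B $ a $ j = 0\<close>.\<close>
  define \<beta> where "\<beta> = B $ a $ j"
  assume "B $ a $ j \<noteq> 0"
  then have \<beta>: "0 < (cmod \<beta>)\<^sup>2"
    by (simp add: \<beta>_def)
  define s where "s = (Re (B $ j $ j) + 1) / (2 * (cmod \<beta>)\<^sup>2)"
  define t where "t = - complex_of_real s * \<beta>"
  have "(\<Sum>l\<in>UNIV. B $ a $ l * axis j 1 $ l) = \<beta>" "(\<Sum>i\<in>UNIV. cnj (axis j 1 $ i) * B $ i $ a) = cnj \<beta>"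
    using psd_hermitian[OF B, of a j]
    by (simp_all add: \<beta>_def axis_def if_distrib[where f=cnj] if_distrib[where f="\<lambda>x. x * _"]
        if_distrib[where f="\<lambda>x. _ * x"] cong: if_cong)
  then have "qform B (axis j 1 + axis a t) = B $ j $ j - complex_of_real (2 * s * (cmod \<beta>)\<^sup>2)"
    by (simp add: qform_add_axis qform_axis zero t_def algebra_simps flip: complex_norm_square)
  moreover have "2 * s * (cmod \<beta>)\<^sup>2 = Re (B $ j $ j) + 1"
    using \<beta> by (simp add: s_def)
  ultimately have "Re (qform B (axis j 1 + axis a t)) = -1"
    by simp
  then show False
    using psd_qform_nonneg[OF B, of "axis j 1 + axis a t"] by simp
qed

text \<open>
  For \<open>B $ a $ a = 0\<close> the junk value \<open>1 / 0 = 0\<close> makes this \<open>B\<close> itself; this is harmless,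
  since then row and column \<open>a\<close> of a positive semidefinite \<open>B\<close> vanish.
\<close>

definition schur_complement :: "'n \<Rightarrow> complex^'n^'n \<Rightarrow> complex^'n^'n" where
  "schur_complement a B = B - mat_scale (1 / B $ a $ a) (outer (column a B))"

lemma psd_schur_complement:
  assumes B: "psd B"
  shows "psd (schur_complement a B)"
proof -
  define b where "b = B $ a $ a"
  have b: "cnj b = b"
    using psd_hermitian[OF B, of a a] by (simp add: b_def)
  have herm: "cnj (B $ i $ j) = B $ j $ i" for i j
    using psd_hermitian[OF B, of i j] by simp
  have entry: "schur_complement a B $ i $ j = B $ i $ j - (1 / b) * (B $ i $ a * B $ a $ j)" for i j
    by (simp add: schur_complement_def column_def b_def herm)
  have "adjoint (schur_complement a B) = schur_complement a B"
    using b by (simp add: vec_eq_iff entry herm mult.commute)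
  \<comment> \<open>completing the square in the coordinate \<open>a\<close>\<close>
  moreover have "qform (schur_complement a B) x = qform B (x + axis a (- (\<Sum>j\<in>UNIV. B $ a $ j * x $ j) / b))" for x
  proof -
    define \<beta> where "\<beta> = (\<Sum>j\<in>UNIV. B $ a $ j * x $ j)"
    have cnj_\<beta>: "(\<Sum>i\<in>UNIV. cnj (x $ i) * B $ i $ a) = cnj \<beta>"
      by (simp add: \<beta>_def herm mult.commute)
    have "qform (schur_complement a B) x
        = qform B x - (1 / b) * (\<Sum>i\<in>UNIV. \<Sum>j\<in>UNIV. (cnj (x $ i) * B $ i $ a) * (B $ a $ j * x $ j))"
      by (simp add: qform_def entry algebra_simps sum_subtractf sum_distrib_left)
    also have "\<dots> = qform B x - (1 / b) * (cnj \<beta> * \<beta>)"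
      by (simp only: sum_product[symmetric] cnj_\<beta> \<beta>_def)
    also have "\<dots> = qform B (x + axis a (- \<beta> / b))"
      unfolding qform_add_axis cnj_\<beta> \<beta>_def[symmetric] using b
      by (simp add: b_def[symmetric] field_simps)
    finally show ?thesis
      by (simp add: \<beta>_def)
  qed
  ultimately show ?thesis
    using psd_qform_nonneg[OF B] by (simp add: psd_iff_qform)
qed

lemma psd_scale_outer:
  assumes "0 \<le> r"
  shows "psd (mat_scale (complex_of_real r) (outer v))"
proof -
  have "0 \<le> Re (qform (mat_scale (complex_of_real r) (outer v)) x)" for x
  proof -
    define \<gamma> where "\<gamma> = (\<Sum>j\<in>UNIV. cnj (v $ j) * x $ j)"
    have "qform (mat_scale (complex_of_real r) (outer v)) x
        = (\<Sum>i\<in>UNIV. \<Sum>j\<in>UNIV. complex_of_real r * ((v $ i * cnj (x $ i)) * (cnj (v $ j) * x $ j)))"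
      unfolding qform_def by (intro sum.cong refl) (simp add: algebra_simps)
    also have "\<dots> = complex_of_real r * ((\<Sum>i\<in>UNIV. v $ i * cnj (x $ i)) * \<gamma>)"
      unfolding \<gamma>_def sum_product by (simp only: sum_distrib_left)
    also have "\<dots> = complex_of_real r * (\<gamma> * cnj \<gamma>)"
      by (simp add: \<gamma>_def mult.commute)
    also have "\<dots> = complex_of_real (r * (cmod \<gamma>)\<^sup>2)"
      by (simp only: of_real_mult complex_norm_square)
    finally show ?thesis
      using assms by simp
  qed
  moreover have "adjoint (mat_scale (complex_of_real r) (outer v)) = mat_scale (complex_of_real r) (outer v)"
    by (simp add: vec_eq_iff mult.commute)
  ultimately show ?thesis
    by (simp add: psd_iff_qform)
qed

lemma psd_matrix_unit: "psd (matrix_unit a a)"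
  using psd_scale_outer[of 1 "axis a 1"] by (simp add: matrix_unit_eq_outer)

definition supported_on :: "'n set \<Rightarrow> complex^'n^'n \<Rightarrow> bool" where
  "supported_on A B \<longleftrightarrow> (\<forall>i j. B $ i $ j \<noteq> 0 \<longrightarrow> i \<in> A \<and> j \<in> A)"

lemma supported_on_UNIV: "supported_on UNIV B"
  by (simp add: supported_on_def)

lemma supported_on_empty: "supported_on {} B \<longleftrightarrow> B = 0"
  by (auto simp add: supported_on_def vec_eq_iff)

lemma supported_on_schur_complement:
  assumes B: "psd B" and supp: "supported_on (insert a A) B"
  shows "supported_on A (schur_complement a B)"
  unfolding supported_on_def
proof (intro allI impI)
  fix i j
  assume nz: "schur_complement a B $ i $ j \<noteq> 0"
  have herm: "cnj (B $ l $ m) = B $ m $ l" for l m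
    using psd_hermitian[OF B, of l m] by simp
  have entry: "schur_complement a B $ l $ m = B $ l $ m - B $ l $ a * B $ a $ m / B $ a $ a" for l m
    by (simp add: schur_complement_def column_def herm)
  have zero_row: "B $ a $ m = 0" and zero_col: "B $ m $ a = 0" if "B $ a $ a = 0" for m
    using psd_zero_diag_row[OF B that, of m] herm[of a m] by auto
  have "schur_complement a B $ a $ m = 0" for m
    by (cases "B $ a $ a = 0") (simp_all add: entry zero_row)
  moreover have "schur_complement a B $ m $ a = 0" for m
    by (cases "B $ a $ a = 0") (simp_all add: entry zero_col)
  ultimately have "i \<noteq> a" "j \<noteq> a"
    using nz by auto
  moreover have "B $ i $ j \<noteq> 0 \<or> (B $ i $ a \<noteq> 0 \<and> B $ a $ j \<noteq> 0)"
    using nz by (auto simp add: entry)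
  ultimately show "i \<in> A \<and> j \<in> A"
    using supp unfolding supported_on_def by blast
qed

section \<open>Unitarily invariant norms\<close>

definition sign_flip :: "'n \<Rightarrow> complex^'n^'n" where
  "sign_flip a = diag_mat (\<lambda>i. if i = a then -1 else 1)"

lemma unitary_sign_flip: "unitary (sign_flip a)"
  unfolding sign_flip_def by (rule unitary_diag_mat) simp

definition pinch :: "'n set \<Rightarrow> complex^'n^'n \<Rightarrow> complex^'n^'n" where
  "pinch A Y = (\<chi> i j. if i = j \<or> (i \<notin> A \<and> j \<notin> A) then Y $ i $ j else 0)"

lemma pinch_empty: "pinch {} Y = Y"
  by (simp add: pinch_def vec_eq_iff)

lemma pinch_insert:
  "pinch (insert a A) Y = mat_scale (1/2) (pinch A Y + sign_flip a ** pinch A Y ** sign_flip a)"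
  by (auto simp add: vec_eq_iff pinch_def sign_flip_def)

locale ui_norm =
  fixes N :: "complex^'n^'n \<Rightarrow> real"
  assumes unitarily_invariant: "unitarily_invariant_norm N"
begin

lemma N_nonneg: "0 \<le> N X"
  using unitarily_invariant by (simp add: unitarily_invariant_norm_def is_matrix_norm_def)

lemma N_eq_0_iff: "N X = 0 \<longleftrightarrow> X = 0"
  using unitarily_invariant by (simp add: unitarily_invariant_norm_def is_matrix_norm_def)

lemma N_scale: "N (mat_scale c X) = cmod c * N X"
  using unitarily_invariant by (simp add: unitarily_invariant_norm_def is_matrix_norm_def mat_scale_def)

lemma N_triangle: "N (X + Y) \<le> N X + N Y"
  using unitarily_invariant by (simp add: unitarily_invariant_norm_def is_matrix_norm_def)

lemma N_unitary_invariant: "unitary U \<Longrightarrow> unitary V \<Longrightarrow> N (U ** X ** V) = N X"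
  using unitarily_invariant by (simp add: unitarily_invariant_norm_def)

lemma N_unitary_left: "unitary U \<Longrightarrow> N (U ** X) = N X"
  using N_unitary_invariant[of U "mat 1" X] by (simp add: unitary_mat_1)

lemma N_uminus: "N (- X) = N X"
proof -
  have "- X = mat_scale (-1) X"
    by (simp add: vec_eq_iff)
  then show ?thesis
    by (simp add: N_scale)
qed

lemma N_half_sum_le:
  assumes "unitary U" "unitary V"
  shows "N (mat_scale (1/2) (X + U ** X ** V)) \<le> N X"
  using N_triangle[of X "U ** X ** V"] by (simp add: N_scale N_unitary_invariant assms)

lemma N_half_diff_le:
  assumes "unitary U" "unitary V"
  shows "N (mat_scale (1/2) (X - U ** X ** V)) \<le> N X"
  using N_triangle[of X "- (U ** X ** V)"] by (simp add: N_scale N_uminus N_unitary_invariant assms)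

lemma N_pinch_le: "finite A \<Longrightarrow> N (pinch A Y) \<le> N Y"
proof (induction A rule: finite_induct)
  case empty
  then show ?case
    by (simp add: pinch_empty)
next
  case (insert a A)
  then show ?case
    using N_half_sum_le[of "sign_flip a" "sign_flip a" "pinch A Y"]
    by (simp add: pinch_insert unitary_sign_flip)
qed

lemma N_diag_abs_le: "N (diag_mat (\<lambda>i. complex_of_real (cmod (Y $ i $ i)))) \<le> N Y"
proof -
  define \<phi> where "\<phi> i = (if Y $ i $ i = 0 then 1 else cnj (Y $ i $ i) / complex_of_real (cmod (Y $ i $ i)))" for i
  have "\<phi> i * Y $ i $ i = complex_of_real (cmod (Y $ i $ i))" for i
    by (cases "Y $ i $ i = 0") (simp_all add: \<phi>_def mult.commute power2_eq_square flip: complex_norm_square)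
  then have "diag_mat (\<lambda>i. complex_of_real (cmod (Y $ i $ i))) = diag_mat \<phi> ** pinch UNIV Y"
    by (simp add: vec_eq_iff pinch_def)
  moreover have "unitary (diag_mat \<phi>)"
    by (rule unitary_diag_mat) (simp add: \<phi>_def norm_divide)
  ultimately show ?thesis
    using N_pinch_le[of UNIV Y] by (simp add: N_unitary_left)
qed

lemma N_entry_part_le: "N (mat_scale (Y $ i $ j) (matrix_unit i j)) \<le> N Y"
proof -
  define R where "R = mat_scale (1/2) (Y - sign_flip i ** Y ** mat 1)"
  have "mat_scale (Y $ i $ j) (matrix_unit i j) = mat_scale (1/2) (R - mat 1 ** R ** sign_flip j)"
    by (simp add: vec_eq_iff R_def sign_flip_def matrix_unit_def)
  also have "N \<dots> \<le> N R"
    by (rule N_half_diff_le) (simp_all add: unitary_mat_1 unitary_sign_flip)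
  also have "N R \<le> N Y"
    unfolding R_def by (rule N_half_diff_le) (simp_all add: unitary_mat_1 unitary_sign_flip)
  finally show ?thesis .
qed

lemma N_outer_column: "unitary U \<Longrightarrow> N (outer (column k U)) = N (matrix_unit k k)"
  using N_unitary_invariant[of U "adjoint U" "matrix_unit k k"]
  by (simp add: unitary_conj_matrix_unit unitary_def)

lemma dual_norm_le:
  assumes "\<And>Y. N Y \<le> 1 \<Longrightarrow> cmod (trace (X ** adjoint Y)) \<le> c"
  shows "dual_norm N X \<le> c"
  unfolding dual_norm_def
proof (rule cSup_least)
  have "N 0 \<le> 1"
    using N_eq_0_iff[of 0] by simp
  then show "{cmod (trace (X ** adjoint Y)) |Y. N Y \<le> 1} \<noteq> {}"
    by blast
qed (use assms in blast)

lemma I_index_le: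
  assumes "psd B" and "N B = 1"
  shows "I_index N A \<le> N (A \<circ>\<^sub>H B)"
  unfolding I_index_def
proof (rule cInf_lower)
  show "bdd_below {N (A \<circ>\<^sub>H B) |B. psd B \<and> N B = 1}"
    by (rule bdd_belowI[of _ 0]) (auto simp add: N_nonneg)
qed (use assms in blast)

end

locale normalized_ui_norm = ui_norm +
  fixes k :: "'n::finite"
  assumes normalized: "N (matrix_unit k k) = 1"
begin

lemma N_outer_unit:
  assumes "norm u = 1"
  shows "N (outer u) = 1"
proof -
  obtain U where U: "unitary U" and col: "column k U = u"
    using assms by (rule unitary_with_column)
  have "N (outer u) = N (matrix_unit k k)"
    unfolding col[symmetric] by (rule N_outer_column[OF U])
  then show ?thesis
    using normalized by simp
qed

lemma N_outer: "N (outer v) = (norm v)\<^sup>2"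
proof (cases "v = 0")
  case True
  then have "outer v = 0"
    by (simp add: vec_eq_iff)
  then show ?thesis
    using True N_eq_0_iff by simp
next
  case False
  have "outer v = mat_scale (complex_of_real ((norm v)\<^sup>2)) (outer (sgn v))"
    using False by (simp add: vec_eq_iff sgn_vec_def) (simp add: scaleR_conv_of_real power2_eq_square field_simps)
  then show ?thesis
    using False by (simp add: N_scale N_outer_unit norm_sgn norm_power)
qed

lemma N_matrix_unit: "N (matrix_unit i j) = 1"
proof -
  obtain U where U: "unitary U" and col: "column j U = axis i 1"
    by (rule unitary_with_column[OF norm_axis_one])
  have "U $ r $ j = axis i 1 $ r" for r
    unfolding col[symmetric] column_def by simp
  then have "U ** matrix_unit j j = matrix_unit i j"
    by (simp add: vec_eq_iff mult_matrix_unit_nth axis_def)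
  then show ?thesis
    using N_unitary_left[OF U, of "matrix_unit j j"] N_outer[of "axis j 1"]
    by (simp add: matrix_unit_eq_outer norm_axis_one)
qed

lemma entry_le_N: "cmod (Y $ i $ j) \<le> N Y"
  using N_entry_part_le[of Y i j] by (simp add: N_scale N_matrix_unit)

lemma trace_mult_adjoint_le:
  "cmod (trace (X ** adjoint Y)) \<le> (\<Sum>i\<in>UNIV. \<Sum>j\<in>UNIV. cmod (X $ i $ j)) * N Y"
proof -
  have "cmod (trace (X ** adjoint Y)) \<le> (\<Sum>i\<in>UNIV. \<Sum>j\<in>UNIV. cmod (X $ i $ j) * cmod (Y $ i $ j))"
    unfolding trace_mult_adjoint
    by (rule order_trans[OF norm_sum sum_mono], rule order_trans[OF norm_sum]) (simp add: norm_mult)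
  also have "\<dots> \<le> (\<Sum>i\<in>UNIV. \<Sum>j\<in>UNIV. cmod (X $ i $ j) * N Y)"
    by (intro sum_mono mult_left_mono entry_le_N norm_ge_zero)
  finally show ?thesis
    by (simp add: sum_distrib_right)
qed

lemma dual_norm_ge: "N Y \<le> 1 \<Longrightarrow> cmod (trace (X ** adjoint Y)) \<le> dual_norm N X"
  unfolding dual_norm_def
proof (rule cSup_upper)
  show "bdd_above {cmod (trace (X ** adjoint Y)) |Y. N Y \<le> 1}"
  proof (rule bdd_aboveI, clarify)
    fix Y :: "complex^'n^'n"
    assume "N Y \<le> 1"
    moreover have "0 \<le> (\<Sum>i\<in>UNIV. \<Sum>j\<in>UNIV. cmod (X $ i $ j))"
      by (intro sum_nonneg norm_ge_zero)
    ultimately show "cmod (trace (X ** adjoint Y)) \<le> (\<Sum>i\<in>UNIV. \<Sum>j\<in>UNIV. cmod (X $ i $ j))"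
      using trace_mult_adjoint_le[of X Y] mult_left_le[of "N Y"] by (meson order_trans)
  qed
qed blast

lemma entry_le_dual_norm: "cmod (X $ i $ j) \<le> dual_norm N X"
proof -
  have "adjoint (matrix_unit i j) = matrix_unit j i"
    by (auto simp add: vec_eq_iff)
  then have "trace (X ** adjoint (matrix_unit i j)) = X $ i $ j"
    by (simp add: trace_def mult_matrix_unit_nth)
  then show ?thesis
    using dual_norm_ge[of "matrix_unit i j" X] by (simp add: N_matrix_unit)
qed

lemma dual_norm_pos:
  assumes "X \<noteq> 0"
  shows "0 < dual_norm N X"
proof -
  obtain i j where "X $ i $ j \<noteq> 0"
    using assms by (auto simp add: vec_eq_iff)
  then have "0 < cmod (X $ i $ j)"
    by simp
  then show ?thesis
    using entry_le_dual_norm[of X i j] by linarith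
qed

lemma I_index_ge:
  assumes "\<And>B. psd B \<Longrightarrow> N B = 1 \<Longrightarrow> c \<le> N (A \<circ>\<^sub>H B)"
  shows "c \<le> I_index N A"
  unfolding I_index_def
proof (rule cInf_greatest)
  show "{N (A \<circ>\<^sub>H B) |B. psd B \<and> N B = 1} \<noteq> {}"
    using psd_matrix_unit[of k] normalized by blast
qed (use assms in blast)

lemma N_le_trace_if_supported_on:
  "finite A \<Longrightarrow> psd B \<Longrightarrow> supported_on A B \<Longrightarrow> N B \<le> Re (trace B)"
proof (induction A arbitrary: B rule: finite_induct)
  case empty
  then show ?case
    using N_eq_0_iff[of 0] by (simp add: supported_on_empty trace_def)
next
  case (insert a A)
  define b where "b = Re (B $ a $ a)"
  define c where "c = column a B"
  have b: "B $ a $ a = complex_of_real b" "0 \<le> b"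
    unfolding b_def by (rule psd_diag_real[OF insert.prems(1)], rule psd_diag_nonneg[OF insert.prems(1)])
  have B: "B = schur_complement a B + mat_scale (complex_of_real (1 / b)) (outer c)"
    by (simp add: schur_complement_def c_def b)
  have "N (schur_complement a B) \<le> Re (trace (schur_complement a B))"
    using insert.prems by (intro insert.IH psd_schur_complement supported_on_schur_complement)
  moreover have "N B \<le> N (schur_complement a B) + (norm c)\<^sup>2 / b"
  proof -
    have "N (mat_scale (complex_of_real (1 / b)) (outer c)) = (norm c)\<^sup>2 / b"
      using b(2) by (simp add: N_scale N_outer norm_divide)
    then show ?thesis
      using N_triangle[of "schur_complement a B" "mat_scale (complex_of_real (1 / b)) (outer c)"]
      unfolding B[symmetric] by simp
  qed
  moreover have "Re (trace B) = Re (trace (schur_complement a B)) + (norm c)\<^sup>2 / b"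
  proof -
    have "trace B = trace (schur_complement a B + mat_scale (complex_of_real (1 / b)) (outer c))"
      using B by (rule arg_cong)
    then show ?thesis
      by (simp add: trace_add trace_mat_scale trace_outer)
  qed
  ultimately show ?case
    by linarith
qed

lemma N_le_trace: "psd B \<Longrightarrow> N B \<le> Re (trace B)"
  using N_le_trace_if_supported_on[of UNIV B] by (simp add: supported_on_UNIV)

lemma one_le_dual_norm_inv_mult_hadamard:
  assumes D: "pos_def_diagonal D" and B: "psd B" "N B = 1"
  shows "1 \<le> dual_norm N (matrix_inv D) * N (D \<circ>\<^sub>H B)"
proof -
  obtain d where d: "\<And>i. 0 < d i" and D_eq: "D = diag_mat (\<lambda>i. complex_of_real (d i))"
    and D_inv: "matrix_inv D = diag_mat (\<lambda>i. complex_of_real (1 / d i))"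
    by (rule pos_def_diagonalE[OF D]) blast
  have d_ne: "d i \<noteq> 0" for i
    using d[of i] by simp
  define C where "C = D \<circ>\<^sub>H B"
  have C: "C $ i $ i = complex_of_real (d i) * B $ i $ i" for i
    by (simp add: C_def D_eq hadamard_diag_mat)
  have trace_B: "1 \<le> Re (trace B)"
    using N_le_trace[OF B(1)] B(2) by simp
  have "C \<noteq> 0"
  proof
    assume "C = 0"
    then have "B $ i $ i = 0" for i
      using C[of i] d_ne[of i] by simp
    then show False
      using trace_B by (simp add: trace_def)
  qed
  then have NC: "0 < N C"
    using N_nonneg[of C] N_eq_0_iff[of C] by linarith
  define Y where "Y = mat_scale (complex_of_real (1 / N C)) C"
  have "N Y = 1"
    using NC by (simp add: Y_def N_scale norm_divide)
  then have "cmod (trace (matrix_inv D ** adjoint Y)) \<le> dual_norm N (matrix_inv D)"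
    by (simp add: dual_norm_ge)
  also have "trace (matrix_inv D ** adjoint Y) = complex_of_real (1 / N C) * cnj (trace B)"
    by (simp add: D_inv trace_diag_mat_mult Y_def C trace_def sum_distrib_left d_ne field_simps)
  finally have "cmod (trace B) / N C \<le> dual_norm N (matrix_inv D)"
    using NC by (simp add: norm_divide)
  moreover have "1 \<le> cmod (trace B)"
    using trace_B complex_Re_le_cmod[of "trace B"] by linarith
  ultimately show ?thesis
    using NC by (simp add: C_def field_simps)
qed

lemma dual_norm_inv_pos:
  assumes "pos_def_diagonal D"
  shows "0 < dual_norm N (matrix_inv D)"
proof -
  obtain d where d: "\<And>i. 0 < d i" and D_inv: "matrix_inv D = diag_mat (\<lambda>i. complex_of_real (1 / d i))"
    by (rule pos_def_diagonalE[OF assms]) blast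
  have "matrix_inv D $ k $ k \<noteq> 0"
    using d[of k] by (simp add: D_inv)
  then show ?thesis
    by (intro dual_norm_pos) auto
qed

lemma I_index_mult_weighted_diag_le_one:
  assumes d: "\<And>i. 0 < d i" and Y: "N Y \<le> 1"
  shows "I_index N (diag_mat (\<lambda>i. complex_of_real (d i))) * (\<Sum>i\<in>UNIV. cmod (Y $ i $ i) / d i) \<le> 1"
proof -
  define t where "t = (\<Sum>i\<in>UNIV. cmod (Y $ i $ i) / d i)"
  have "0 \<le> t"
    unfolding t_def using d by (simp add: sum_nonneg less_imp_le)
  show ?thesis
  proof (cases "t = 0")
    case True
    then show ?thesis
      by (simp add: t_def)
  next
    case False
    with \<open>0 \<le> t\<close> have t: "0 < t"
      by simp
    define v where "v = (\<chi> i. complex_of_real (sqrt (cmod (Y $ i $ i) / d i)))"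
    have v: "(cmod (v $ i))\<^sup>2 = cmod (Y $ i $ i) / d i" for i
      using d[of i] by (simp add: v_def)
    define B where "B = mat_scale (complex_of_real (1 / t)) (outer v)"
    have "psd B"
      unfolding B_def by (rule psd_scale_outer) (use t in simp)
    moreover have "N B = 1"
      using t by (simp add: B_def N_scale N_outer norm_power2_vec v t_def[symmetric] norm_divide)
    ultimately have "I_index N (diag_mat (\<lambda>i. complex_of_real (d i)))
        \<le> N (diag_mat (\<lambda>i. complex_of_real (d i)) \<circ>\<^sub>H B)"
      by (rule I_index_le)
    also have "diag_mat (\<lambda>i. complex_of_real (d i)) \<circ>\<^sub>H B
        = mat_scale (complex_of_real (1 / t)) (diag_mat (\<lambda>i. complex_of_real (cmod (Y $ i $ i))))"
    proof -
      have "complex_of_real (d i) * (v $ i * cnj (v $ i)) = complex_of_real (cmod (Y $ i $ i))" for i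
        using d[of i] by (simp add: complex_norm_square[symmetric] v)
      then show ?thesis
        by (simp add: hadamard_diag_mat B_def vec_eq_iff algebra_simps)
    qed
    also have "N \<dots> \<le> 1 / t"
      using N_diag_abs_le[of Y] Y t by (simp add: N_scale norm_divide divide_right_mono)
    finally show ?thesis
      using t by (simp add: t_def[symmetric] field_simps)
  qed
qed

lemma trace_inv_mult_I_index_le_one:
  assumes D: "pos_def_diagonal D" and Y: "N Y \<le> 1"
  shows "cmod (trace (matrix_inv D ** adjoint Y)) * I_index N D \<le> 1"
proof -
  obtain d where d: "\<And>i. 0 < d i" and D_eq: "D = diag_mat (\<lambda>i. complex_of_real (d i))"
    and D_inv: "matrix_inv D = diag_mat (\<lambda>i. complex_of_real (1 / d i))"
    by (rule pos_def_diagonalE[OF D]) blast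
  have "cmod (trace (matrix_inv D ** adjoint Y)) \<le> (\<Sum>i\<in>UNIV. cmod (Y $ i $ i) / d i)"
    unfolding D_inv trace_diag_mat_mult
    by (rule order_trans[OF norm_sum]) (use d in \<open>simp add: norm_mult norm_divide less_imp_le\<close>)
  moreover have "0 \<le> I_index N D"
    by (rule I_index_ge) (rule N_nonneg)
  ultimately have "cmod (trace (matrix_inv D ** adjoint Y)) * I_index N D
      \<le> (\<Sum>i\<in>UNIV. cmod (Y $ i $ i) / d i) * I_index N D"
    by (rule mult_right_mono)
  also have "\<dots> \<le> 1"
    using I_index_mult_weighted_diag_le_one[OF d Y] by (simp add: D_eq mult.commute)
  finally show ?thesis .
qed

end

theorem proposition5p3:
  fixes N :: "complex^'n^'n \<Rightarrow> real" and D :: "complex^'n^'n" and k :: 'n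
  assumes "unitarily_invariant_norm N"
    and "N (matrix_unit k k) = 1"
    and "pos_def_diagonal D"
  shows "I_index N D = inverse (dual_norm N (matrix_inv D))"
proof -
  interpret normalized_ui_norm N k
    using assms(1,2) by unfold_locales
  define s where "s = dual_norm N (matrix_inv D)"
  have s: "0 < s"
    unfolding s_def by (rule dual_norm_inv_pos[OF assms(3)])
  have lower: "1 / s \<le> I_index N D"
  proof (rule I_index_ge)
    fix B
    assume "psd B" and "N B = 1"
    with s show "1 / s \<le> N (D \<circ>\<^sub>H B)"
      using one_le_dual_norm_inv_mult_hadamard[OF assms(3)] by (simp add: s_def field_simps)
  qed
  have I: "0 < I_index N D"
    by (rule less_le_trans[OF _ lower]) (simp add: s)
  have "s \<le> 1 / I_index N D"
    unfolding s_def
  proof (rule dual_norm_le)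
    fix Y
    assume "N Y \<le> 1"
    with I show "cmod (trace (matrix_inv D ** adjoint Y)) \<le> 1 / I_index N D"
      using trace_inv_mult_I_index_le_one[OF assms(3)] by (simp add: field_simps)
  qed
  with lower s I show ?thesis
    by (simp add: s_def inverse_eq_divide field_simps)
qed

end
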